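(* Let $t \geq 1$ be an integer and let $\mathcal{F} \neq \emptyset$ be a finite family of finite sets. Then $\beta(\mathcal{F},t) \geq \frac{1}{|\mathcal{F}|}$, and equality holds if and only if $|A \cap B| < t$ for any distinct $A$ and $B$ in $\mathcal{F}$.
   Context: A family $\mathcal{A}$ is $t$-intersecting if $|A \cap B| \geq t$ for all $A, B \in \mathcal{A}$ with $A \neq B$. $l(\mathcal{F},t)$ is the size of a largest $t$-intersecting sub-family of $\mathcal{F}$. For a family $\mathcal{A}$, $\mathcal{A}^{t,+} = \{A \in \mathcal{A} : |A \cap B| \geq t \text{ for all } B \in \mathcal{A}\setminus\{A\}\}$ and $\mathcal{A}^{t,-} = \mathcal{A} \setminus \mathcal{A}^{t,+}$. For $\mathcal{A} \subseteq \mathcal{F}$, $\beta(\mathcal{F},t,\mathcal{A}) = \frac{l(\mathcal{F},t) - |\mathcal{A}^{t,+}|}{|\mathcal{A}^{t,-}|}$ if $\mathcal{A}^{t,-} \neq \emptyset$, and $\frac{l(\mathcal{F},t)}{|\mathcal{F}|}$ if $\mathcal{A}^{t,-} = \emptyset$; $\beta(\mathcal{F},t) = \min\{\beta(\mathcal{F},t,\mathcal{A}) : \mathcal{A} \subseteq \mathcal{F}\}$. *)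

theory Defs
  imports Complex_Main
begin

definition t_intersecting :: "'a set set \<Rightarrow> nat \<Rightarrow> bool" where
  "t_intersecting \<A> t \<longleftrightarrow> (\<forall>A\<in>\<A>. \<forall>B\<in>\<A>. A \<noteq> B \<longrightarrow> card (A \<inter> B) \<ge> t)"

definition l_int :: "'a set set \<Rightarrow> nat \<Rightarrow> nat" where
  "l_int \<F> t = Max {card \<A> | \<A>. \<A> \<subseteq> \<F> \<and> t_intersecting \<A> t}"

definition plus_part :: "'a set set \<Rightarrow> nat \<Rightarrow> 'a set set" where
  "plus_part \<A> t = {A \<in> \<A>. \<forall>B \<in> \<A> - {A}. card (A \<inter> B) \<ge> t}"

definition minus_part :: "'a set set \<Rightarrow> nat \<Rightarrow> 'a set set" where
  "minus_part \<A> t = \<A> - plus_part \<A> t"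

definition beta_A :: "'a set set \<Rightarrow> nat \<Rightarrow> 'a set set \<Rightarrow> real" where
  "beta_A \<F> t \<A> =
     (if minus_part \<A> t \<noteq> {}
      then (real (l_int \<F> t) - real (card (plus_part \<A> t))) / real (card (minus_part \<A> t))
      else real (l_int \<F> t) / real (card \<F>))"

definition beta :: "'a set set \<Rightarrow> nat \<Rightarrow> real" where
  "beta \<F> t = Min {beta_A \<F> t \<A> | \<A>. \<A> \<subseteq> \<F>}"

end

theory Submission
  imports Defs
begin

text \<open>For \<open>\<A> \<subseteq> \<F>\<close> with nonempty minus part, adding any member of the minus part to
  the plus part gives a \<open>t\<close>-intersecting subfamily, so \<open>l(\<F>,t) - |plus part| \<ge> 1\<close>, while
  \<open>|minus part| \<le> |\<F>|\<close>; hence \<open>\<beta>(\<F>,t,\<A>) \<ge> 1/|\<F>|\<close>, and equality forces \<open>l(\<F>,t) = 1\<close>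
  (when the minus part is empty this follows from \<open>l(\<F>,t) \<ge> 1\<close>).  Conversely, if
  \<open>l(\<F>,t) = 1\<close> then \<open>\<A> = {}\<close> attains \<open>1/|\<F>|\<close>.  Finally, \<open>l(\<F>,t) = 1\<close> says exactly
  that no two distinct members of \<open>\<F>\<close> share \<open>t\<close> or more elements.\<close>

lemma finite_card_t_intersecting_subfamilies:
  assumes "finite \<F>"
  shows "finite {card \<A> | \<A>. \<A> \<subseteq> \<F> \<and> t_intersecting \<A> t}"
proof (rule finite_subset)
  show "{card \<A> | \<A>. \<A> \<subseteq> \<F> \<and> t_intersecting \<A> t} \<subseteq> {0..card \<F>}"
    using assms by (auto intro: card_mono)
qed simp

lemma card_le_l_int:
  assumes "finite \<F>" "\<A> \<subseteq> \<F>" "t_intersecting \<A> t"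
  shows "card \<A> \<le> l_int \<F> t"
  unfolding l_int_def using finite_card_t_intersecting_subfamilies[OF assms(1)] assms(2,3)
  by (intro Max_ge) auto

lemma l_int_attained:
  assumes "finite \<F>"
  obtains \<A> where "\<A> \<subseteq> \<F>" "t_intersecting \<A> t" "card \<A> = l_int \<F> t"
proof -
  have "{} \<subseteq> \<F> \<and> t_intersecting {} t" by (simp add: t_intersecting_def)
  then have "{card \<A> | \<A>. \<A> \<subseteq> \<F> \<and> t_intersecting \<A> t} \<noteq> {}" by blast
  from Max_in[OF finite_card_t_intersecting_subfamilies[OF assms] this]
  have "l_int \<F> t \<in> {card \<A> | \<A>. \<A> \<subseteq> \<F> \<and> t_intersecting \<A> t}"
    unfolding l_int_def .
  with that show thesis by auto
qed

lemma l_int_ge_1: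
  assumes "finite \<F>" "\<F> \<noteq> {}"
  shows "1 \<le> l_int \<F> t"
proof -
  obtain X where "X \<in> \<F>" using assms(2) by blast
  then have "card {X} \<le> l_int \<F> t"
    by (intro card_le_l_int[OF assms(1)]) (auto simp: t_intersecting_def)
  then show ?thesis by simp
qed

lemma l_int_eq_1_iff:
  assumes "finite \<F>" "\<F> \<noteq> {}"
  shows "l_int \<F> t = 1 \<longleftrightarrow> (\<forall>A\<in>\<F>. \<forall>B\<in>\<F>. A \<noteq> B \<longrightarrow> card (A \<inter> B) < t)"
proof
  assume l1: "l_int \<F> t = 1"
  show "\<forall>A\<in>\<F>. \<forall>B\<in>\<F>. A \<noteq> B \<longrightarrow> card (A \<inter> B) < t"
  proof (intro ballI impI, rule ccontr)
    fix A B assume AB: "A \<in> \<F>" "B \<in> \<F>" "A \<noteq> B" and "\<not> card (A \<inter> B) < t"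
    then have "t_intersecting {A, B} t" by (auto simp: t_intersecting_def Int_commute)
    then have "card {A, B} \<le> l_int \<F> t"
      using AB(1,2) by (intro card_le_l_int[OF assms(1)]) auto
    with l1 \<open>A \<noteq> B\<close> show False by simp
  qed
next
  assume disjoint: "\<forall>A\<in>\<F>. \<forall>B\<in>\<F>. A \<noteq> B \<longrightarrow> card (A \<inter> B) < t"
  obtain \<C> where \<C>: "\<C> \<subseteq> \<F>" "t_intersecting \<C> t" "card \<C> = l_int \<F> t"
    using l_int_attained[OF assms(1)] .
  have "\<forall>x\<in>\<C>. \<forall>y\<in>\<C>. x = y"
    using \<C>(1,2) disjoint unfolding t_intersecting_def by (meson not_le subsetD)
  then have "card \<C> \<le> 1"
    using finite_subset[OF \<C>(1) assms(1)] by (simp add: card_le_Suc0_iff_eq)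
  with \<C>(3) l_int_ge_1[OF assms, of t] show "l_int \<F> t = 1" by simp
qed

lemma t_intersecting_insert_plus_part:
  assumes "X \<in> \<A>"
  shows "t_intersecting (insert X (plus_part \<A> t)) t"
  using assms unfolding t_intersecting_def plus_part_def by (auto simp: Int_commute)

lemma card_plus_part_less_l_int:
  assumes "finite \<F>" "\<A> \<subseteq> \<F>" "minus_part \<A> t \<noteq> {}"
  shows "card (plus_part \<A> t) < l_int \<F> t"
proof -
  obtain X where X: "X \<in> \<A>" "X \<notin> plus_part \<A> t"
    using assms(3) unfolding minus_part_def by blast
  have plus_sub: "plus_part \<A> t \<subseteq> \<F>" using assms(2) unfolding plus_part_def by auto
  have "card (insert X (plus_part \<A> t)) \<le> l_int \<F> t"
    using card_le_l_int[OF assms(1) _ t_intersecting_insert_plus_part[OF X(1)]] plus_sub X(1) assms(2)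
    by auto
  moreover have "card (insert X (plus_part \<A> t)) = Suc (card (plus_part \<A> t))"
    using X(2) finite_subset[OF plus_sub assms(1)] by simp
  ultimately show ?thesis by simp
qed

lemma beta_A_chain_if_minus_part_nonempty:
  assumes "finite \<F>" "\<A> \<subseteq> \<F>" "minus_part \<A> t \<noteq> {}"
  shows "1 / real (card \<F>) \<le> 1 / real (card (minus_part \<A> t))"
    and "1 / real (card (minus_part \<A> t)) \<le> beta_A \<F> t \<A>"
proof -
  have m_pos: "card (minus_part \<A> t) > 0"
    using assms(3) finite_subset[OF assms(2,1)] by (simp add: card_gt_0_iff minus_part_def)
  have "card (minus_part \<A> t) \<le> card \<F>"
    using assms(1,2) by (intro card_mono) (auto simp: minus_part_def)
  with m_pos show "1 / real (card \<F>) \<le> 1 / real (card (minus_part \<A> t))"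
    by (simp add: frac_le)
  have "1 \<le> real (l_int \<F> t) - real (card (plus_part \<A> t))"
    using card_plus_part_less_l_int[OF assms] by linarith
  with m_pos assms(3) show "1 / real (card (minus_part \<A> t)) \<le> beta_A \<F> t \<A>"
    by (simp add: beta_A_def divide_right_mono)
qed

lemma beta_A_ge_inverse_card:
  assumes "finite \<F>" "\<F> \<noteq> {}" "\<A> \<subseteq> \<F>"
  shows "1 / real (card \<F>) \<le> beta_A \<F> t \<A>"
proof (cases "minus_part \<A> t = {}")
  case True
  with l_int_ge_1[OF assms(1,2), of t] show ?thesis
    by (simp add: beta_A_def divide_right_mono)
next
  case False
  from beta_A_chain_if_minus_part_nonempty[OF assms(1,3) False] show ?thesis by linarith
qed

lemma l_int_eq_1_if_beta_A_eq_inverse_card: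
  assumes "finite \<F>" "\<F> \<noteq> {}" "\<A> \<subseteq> \<F>"
    and eq: "beta_A \<F> t \<A> = 1 / real (card \<F>)"
  shows "l_int \<F> t = 1"
proof (cases "minus_part \<A> t = {}")
  case True
  with eq have "real (l_int \<F> t) / real (card \<F>) = 1 / real (card \<F>)"
    by (simp add: beta_A_def)
  with assms(1,2) show ?thesis by (simp add: divide_cancel_right)
next
  case False
  let ?m = "card (minus_part \<A> t)"
  note chain = beta_A_chain_if_minus_part_nonempty[OF assms(1,3) False]
  have m_pos: "?m > 0"
    using False finite_subset[OF assms(3,1)] by (simp add: card_gt_0_iff minus_part_def)
  have "1 / real ?m = 1 / real (card \<F>)" using chain eq by linarith
  then have "?m = card \<F>" by simp
  with assms(1) have "minus_part \<A> t = \<F>"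
    by (intro card_subset_eq) (use assms(3) in \<open>auto simp: minus_part_def\<close>)
  then have "plus_part \<A> t = {}" using assms(3) unfolding minus_part_def plus_part_def by auto
  moreover have "beta_A \<F> t \<A> = 1 / real ?m" using chain eq by linarith
  with False m_pos have "real (l_int \<F> t) - real (card (plus_part \<A> t)) = 1"
    by (simp add: beta_A_def field_simps)
  ultimately show ?thesis by simp
qed

lemma finite_beta_A_values:
  assumes "finite \<F>"
  shows "finite {beta_A \<F> t \<A> | \<A>. \<A> \<subseteq> \<F>}"
proof -
  have "{beta_A \<F> t \<A> | \<A>. \<A> \<subseteq> \<F>} = beta_A \<F> t ` Pow \<F>" by auto
  with assms show ?thesis by simp
qed

lemma beta_attained:
  assumes "finite \<F>"
  obtains \<A> where "\<A> \<subseteq> \<F>" "beta \<F> t = beta_A \<F> t \<A>"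
  using Min_in[OF finite_beta_A_values[OF assms], of t] that unfolding beta_def by blast

lemma beta_le_beta_A:
  assumes "finite \<F>" "\<A> \<subseteq> \<F>"
  shows "beta \<F> t \<le> beta_A \<F> t \<A>"
  unfolding beta_def using finite_beta_A_values[OF assms(1)] assms(2) by (intro Min_le) auto

lemma beta_A_empty: "beta_A \<F> t {} = real (l_int \<F> t) / real (card \<F>)"
  by (simp add: beta_A_def minus_part_def plus_part_def)

theorem proposition3p1:
  fixes \<F> :: "'a set set" and t :: nat
  assumes "t \<ge> 1"
    and "finite \<F>" and "\<F> \<noteq> {}"
    and "\<forall>A\<in>\<F>. finite A"
  shows "beta \<F> t \<ge> 1 / real (card \<F>)
    \<and> (beta \<F> t = 1 / real (card \<F>) \<longleftrightarrow>
         (\<forall>A\<in>\<F>. \<forall>B\<in>\<F>. A \<noteq> B \<longrightarrow> card (A \<inter> B) < t))"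
proof -
  obtain \<A> where \<A>: "\<A> \<subseteq> \<F>" "beta \<F> t = beta_A \<F> t \<A>"
    using beta_attained[OF assms(2)] .
  have "beta \<F> t = 1 / real (card \<F>) \<longleftrightarrow> l_int \<F> t = 1"
  proof
    assume "l_int \<F> t = 1"
    then have "beta \<F> t \<le> 1 / real (card \<F>)"
      using beta_le_beta_A[OF assms(2) empty_subsetI, of t] by (simp add: beta_A_empty)
    with beta_A_ge_inverse_card[OF assms(2,3) \<A>(1), of t] \<A>(2)
    show "beta \<F> t = 1 / real (card \<F>)" by simp
  qed (use l_int_eq_1_if_beta_A_eq_inverse_card[OF assms(2,3) \<A>(1)] \<A>(2) in simp)
  with beta_A_ge_inverse_card[OF assms(2,3) \<A>(1), of t] \<A>(2) l_int_eq_1_iff[OF assms(2,3)]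
  show ?thesis by simp
qed

end
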